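(* Let $S$ be a compact metric space and $h:\mathbb{R}^d\times S\to\mathbb{R}^d$ a jointly continuous map for which there is $L>0$ with $\lVert h(x_1,y)-h(x_2,y)\rVert\le L\lVert x_1-x_2\rVert$ for all $x_1,x_2\in\mathbb{R}^d$, $y\in S$. For $c\ge1$ let $h_c(x,y):=h(cx,y)/c$; let $h_\infty(x,y)$ be the set of all $u\in\mathbb{R}^d$ with $\liminf_{c\to\infty}\lVert h_c(x,y)-u\rVert=0$; and let $H(x):=\overline{co}\big(\bigcup_{y\in S}h_\infty(x,y)\big)$ (closed convex hull). Assume (S1): whenever $c_n\uparrow\infty$, $y_n\to y$ in $S$, $x\in\mathbb{R}^d$ and $\lim_{n}h_{c_n}(x,y_n)=u$, then $u\in h_\infty(x,y)$. Then $H$ is a Marchaud map.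
   Context: A set-valued map $F:\mathbb{R}^n\to\{\text{subsets of }\mathbb{R}^m\}$ is a Marchaud map if (i) $F(x)$ is convex and compact for each $x$; (ii) there is $K>0$ with $\sup_{w\in F(x)}\lVert w\rVert<K(1+\lVert x\rVert)$ for all $x$; (iii) $F$ is upper-semicontinuous, i.e. its graph $\{(x,y):y\in F(x)\}$ is closed in $\mathbb{R}^n\times\mathbb{R}^m$. *)

theory Defs
  imports "HOL-Analysis.Analysis"
begin

definition marchaud :: "('a::euclidean_space \<Rightarrow> 'c::euclidean_space set) \<Rightarrow> bool" where
  "marchaud F \<longleftrightarrow>
     (\<forall>x. convex (F x) \<and> compact (F x)) \<and>
     (\<exists>K>0. \<forall>x. \<forall>w\<in>F x. norm w < K * (1 + norm x)) \<and>
     closed {(x, y). y \<in> F x}"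

definition hscale :: "('a::real_normed_vector \<times> 'b \<Rightarrow> 'a) \<Rightarrow> real \<Rightarrow> 'a \<Rightarrow> 'b \<Rightarrow> 'a" where
  "hscale h c x y = (1 / c) *\<^sub>R h (c *\<^sub>R x, y)"

definition hinf :: "('a::real_normed_vector \<times> 'b \<Rightarrow> 'a) \<Rightarrow> 'a \<Rightarrow> 'b \<Rightarrow> 'a set" where
  "hinf h x y = {u. Liminf at_top (\<lambda>c::real. ereal (norm (hscale h c x y - u))) = 0}"

definition Hmap :: "('a::real_normed_vector \<times> 'b \<Rightarrow> 'a) \<Rightarrow> 'b set \<Rightarrow> 'a \<Rightarrow> 'a set" where
  "Hmap h S x = closure (convex hull (\<Union>y\<in>S. hinf h x y))"

end

theory Submission
  imports Defs
begin

text \<open>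
  The Lipschitz bound on \<open>h\<close> survives the rescaling \<open>h\<^sub>c\<close> unchanged, so every
  \<open>u \<in> h\<^sub>\<infinity>(x\<^sub>1, y)\<close> has a partner in \<open>h\<^sub>\<infinity>(x\<^sub>2, y)\<close> at distance at most \<open>L \<parallel>x\<^sub>1 - x\<^sub>2\<parallel>\<close>
  (a limit point of \<open>h\<^sub>c(x\<^sub>2, y)\<close> along a sequence realising \<open>u\<close>).  Passing to closed convex
  hulls, \<open>H(x\<^sub>1)\<close> lies in the \<open>L \<parallel>x\<^sub>1 - x\<^sub>2\<parallel>\<close>-neighbourhood of \<open>H(x\<^sub>2)\<close>; such a
  set-valued map with closed values has a closed graph.  The values are bounded by
  \<open>sup\<^sub>y\<^sub>\<in>\<^sub>S \<parallel>h(0, y)\<parallel> + L \<parallel>x\<parallel>\<close>, finite by compactness of \<open>S\<close>, which gives compact values and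
  linear growth.
\<close>

lemma mem_hinf_iff:
  "u \<in> hinf h x y \<longleftrightarrow> (\<forall>e>0. \<forall>C. \<exists>c\<ge>C. norm (hscale h c x y - u) < e)"
proof -
  let ?X = "\<lambda>c::real. ereal (norm (hscale h c x y - u))"
  have "0 \<le> Liminf at_top ?X"
    by (rule Liminf_bounded) auto
  moreover have "Liminf at_top ?X \<le> 0 \<longleftrightarrow> (\<forall>e>0. \<forall>C. \<exists>c\<ge>C. norm (hscale h c x y - u) < e)"
  proof
    assume L0: "Liminf at_top ?X \<le> 0"
    show "\<forall>e>0. \<forall>C. \<exists>c\<ge>C. norm (hscale h c x y - u) < e"
    proof (intro allI impI, rule ccontr)
      fix e :: real and C
      assume e: "e > 0" and far: "\<not> (\<exists>c\<ge>C. norm (hscale h c x y - u) < e)"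
      have "\<forall>\<^sub>F c in at_top. ereal e \<le> ?X c"
        using far by (intro eventually_at_top_linorderI[of C]) auto
      then have "ereal e \<le> Liminf at_top ?X"
        by (intro Liminf_bounded)
      from this L0 have "ereal e \<le> 0"
        by (rule order_trans)
      with e show False by simp
    qed
  next
    assume near: "\<forall>e>0. \<forall>C. \<exists>c\<ge>C. norm (hscale h c x y - u) < e"
    show "Liminf at_top ?X \<le> 0"
    proof (rule ccontr)
      assume "\<not> Liminf at_top ?X \<le> 0"
      then have "0 < Liminf at_top ?X"
        by simp
      then obtain e :: real where e: "0 < e" "ereal e < Liminf at_top ?X"
        using ereal_dense2 by (force simp: zero_ereal_def)
      from less_LiminfD[OF e(2)] obtain C where "\<And>c. c \<ge> C \<Longrightarrow> ereal e < ?X c"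
        by (auto simp: eventually_at_top_linorder)
      with near e(1) show False by force
    qed
  qed
  ultimately show ?thesis
    by (auto simp: hinf_def)
qed

lemma hinf_obtain_sequence:
  assumes "u \<in> hinf h x y"
  obtains c :: "nat \<Rightarrow> real" where "\<And>n. c n \<ge> 1" "filterlim c at_top sequentially"
    "(\<lambda>n. hscale h (c n) x y) \<longlonglongrightarrow> u"
proof -
  have "\<exists>c\<ge>real n + 1. norm (hscale h c x y - u) < inverse (real (Suc n))" for n
    using assms unfolding mem_hinf_iff
    by (meson inverse_positive_iff_positive of_nat_0_less_iff zero_less_Suc)
  then obtain c where c: "\<And>n. c n \<ge> real n + 1"
    "\<And>n. norm (hscale h (c n) x y - u) < inverse (real (Suc n))"
    by metis
  show thesis
  proof
    show "c n \<ge> 1" for n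
      using c(1)[of n] by simp
    show "filterlim c at_top sequentially"
      by (rule filterlim_at_top_mono[OF filterlim_real_sequentially always_eventually])
        (use c(1) in \<open>smt (verit)\<close>)
    show "(\<lambda>n. hscale h (c n) x y) \<longlonglongrightarrow> u"
      by (rule LIM_zero_cancel, rule Lim_null_comparison[OF _ LIMSEQ_inverse_real_of_nat])
        (use c(2) in \<open>auto intro!: always_eventually less_imp_le\<close>)
  qed
qed

lemma mem_hinfI_sequence:
  assumes c: "filterlim c at_top sequentially"
    and lim: "(\<lambda>n. hscale h (c n) x y) \<longlonglongrightarrow> u"
  shows "u \<in> hinf h x y"
  unfolding mem_hinf_iff
proof (intro allI impI)
  fix e :: real and C assume "e > 0"
  then have "\<forall>\<^sub>F n in sequentially. C \<le> c n \<and> norm (hscale h (c n) x y - u) < e"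
    using c lim by (auto simp: filterlim_at_top tendsto_iff dist_norm intro: eventually_conj)
  then obtain n where "C \<le> c n" "norm (hscale h (c n) x y - u) < e"
    by (auto simp: eventually_sequentially)
  then show "\<exists>c'\<ge>C. norm (hscale h c' x y - u) < e"
    by (intro exI[of _ "c n"]) simp
qed

lemma hscale_lipschitz:
  assumes lip: "\<And>x1 x2. norm (h (x1, y) - h (x2, y)) \<le> L * norm (x1 - x2)"
    and c: "c \<ge> 1"
  shows "norm (hscale h c x1 y - hscale h c x2 y) \<le> L * norm (x1 - x2)"
proof -
  have "norm (hscale h c x1 y - hscale h c x2 y) = norm (h (c *\<^sub>R x1, y) - h (c *\<^sub>R x2, y)) / c"
    using c by (simp add: hscale_def flip: scaleR_diff_right)
  also have "\<dots> \<le> L * norm (c *\<^sub>R x1 - c *\<^sub>R x2) / c"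
    using lip c by (intro divide_right_mono) auto
  also have "\<dots> = L * norm (x1 - x2)"
    using c by (simp flip: scaleR_diff_right)
  finally show ?thesis .
qed

lemma norm_hscale_le:
  assumes lip: "\<And>x1 x2. norm (h (x1, y) - h (x2, y)) \<le> L * norm (x1 - x2)"
    and c: "c \<ge> 1"
  shows "norm (hscale h c x y) \<le> norm (h (0, y)) + L * norm x"
proof -
  have "norm (hscale h c 0 y) \<le> norm (h (0, y))"
    using c by (simp add: hscale_def divide_le_eq mult_le_cancel_left1)
  moreover have "norm (hscale h c x y - hscale h c 0 y) \<le> L * norm x"
    using hscale_lipschitz[OF lip c, of x 0] by simp
  ultimately show ?thesis
    by (smt (verit) norm_triangle_sub)
qed

lemma norm_hinf_le:
  assumes lip: "\<And>x1 x2. norm (h (x1, y) - h (x2, y)) \<le> L * norm (x1 - x2)"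
    and u: "u \<in> hinf h x y"
  shows "norm u \<le> norm (h (0, y)) + L * norm x"
proof -
  obtain c where "\<And>n. c n \<ge> 1" "(\<lambda>n. hscale h (c n) x y) \<longlonglongrightarrow> u"
    using hinf_obtain_sequence[OF u] by metis
  then show ?thesis
    by (intro Lim_norm_ubound[OF trivial_limit_sequentially])
      (auto intro!: always_eventually norm_hscale_le[OF lip])
qed

lemma hinf_lipschitz:
  fixes h :: "'a::{real_normed_vector, heine_borel} \<times> 'b \<Rightarrow> 'a"
  assumes lip: "\<And>x1 x2. norm (h (x1, y) - h (x2, y)) \<le> L * norm (x1 - x2)"
    and u: "u \<in> hinf h x1 y"
  shows "\<exists>u'\<in>hinf h x2 y. dist u u' \<le> L * dist x1 x2"
proof -
  obtain c where c: "\<And>n. c n \<ge> 1" "filterlim c at_top sequentially"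
    and lim: "(\<lambda>n. hscale h (c n) x1 y) \<longlonglongrightarrow> u"
    using hinf_obtain_sequence[OF u] by metis
  define v where "v n = hscale h (c n) x2 y" for n
  have "bounded (range v)"
    using norm_hscale_le[OF lip c(1)] by (auto simp: v_def bounded_iff)
  then obtain r u' where r: "strict_mono r" and lim': "(v \<circ> r) \<longlonglongrightarrow> u'"
    using bounded_imp_convergent_subsequence by blast
  have "u' \<in> hinf h x2 y"
    by (rule mem_hinfI_sequence[OF filterlim_compose[OF c(2) filterlim_subseq[OF r]]])
      (use lim' in \<open>simp add: v_def o_def\<close>)
  moreover have "norm (u - u') \<le> L * norm (x1 - x2)"
  proof (rule Lim_norm_ubound[OF trivial_limit_sequentially])
    show "(\<lambda>n. hscale h (c (r n)) x1 y - v (r n)) \<longlonglongrightarrow> u - u'"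
      using lim' LIMSEQ_subseq_LIMSEQ[OF lim r] by (intro tendsto_diff) (simp_all add: o_def)
    show "\<forall>\<^sub>F n in sequentially. norm (hscale h (c (r n)) x1 y - v (r n)) \<le> L * norm (x1 - x2)"
      using hscale_lipschitz[OF lip c(1)] by (simp add: v_def)
  qed
  ultimately show ?thesis
    by (auto simp: dist_norm)
qed

lemma closure_convex_hull_near_compact_convex:
  fixes A B :: "'a::real_normed_vector set"
  assumes "convex B" "compact B" and near: "\<forall>a\<in>A. \<exists>b\<in>B. dist a b \<le> d"
  shows "\<forall>w\<in>closure (convex hull A). \<exists>b\<in>B. dist w b \<le> d"
proof -
  define T where "T = (\<Union>b\<in>B. \<Union>e\<in>cball 0 d. {b + e})"
  have "convex T"
    using assms by (simp add: T_def convex_sums)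
  moreover have "closed T"
    using assms unfolding T_def by (intro compact_closed_sums closed_cball)
  moreover have "A \<subseteq> T"
  proof
    fix a assume "a \<in> A"
    with near obtain b where "b \<in> B" "dist a b \<le> d" by blast
    moreover have "a = b + (a - b)"
      by simp
    ultimately show "a \<in> T"
      unfolding T_def by (fastforce simp: dist_norm)
  qed
  ultimately have hull_T: "closure (convex hull A) \<subseteq> T"
    by (intro closure_minimal hull_minimal)
  show ?thesis
  proof
    fix w assume "w \<in> closure (convex hull A)"
    with hull_T obtain b e where "b \<in> B" "norm e \<le> d" "w = b + e"
      unfolding T_def by auto
    then show "\<exists>b\<in>B. dist w b \<le> d"
      by (intro bexI[of _ b]) (simp_all add: dist_norm)
  qed
qed

lemma closed_graph_if_lipschitz_values:
  fixes F :: "'a::metric_space \<Rightarrow> 'b::real_normed_vector set"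
  assumes closed_values: "\<And>x. closed (F x)"
    and lip: "\<And>x1 x2 w. w \<in> F x1 \<Longrightarrow> \<exists>v\<in>F x2. dist w v \<le> L * dist x1 x2"
  shows "closed {(x, y). y \<in> F x}"
  unfolding closed_sequential_limits
proof (intro allI impI, elim conjE)
  fix p :: "nat \<Rightarrow> 'a \<times> 'b" and l
  assume p: "\<forall>n. p n \<in> {(x, y). y \<in> F x}" and lim: "p \<longlonglongrightarrow> l"
  have "\<forall>n. \<exists>v. v \<in> F (fst l) \<and> dist (snd (p n)) v \<le> L * dist (fst (p n)) (fst l)"
  proof
    fix n
    have "snd (p n) \<in> F (fst (p n))"
      using p by (simp add: case_prod_beta)
    from lip[OF this, of "fst l"]
    show "\<exists>v. v \<in> F (fst l) \<and> dist (snd (p n)) v \<le> L * dist (fst (p n)) (fst l)"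
      by blast
  qed
  then obtain v where "\<forall>n. v n \<in> F (fst l) \<and> dist (snd (p n)) (v n) \<le> L * dist (fst (p n)) (fst l)"
    by (rule choice[THEN exE])
  then have v: "\<And>n. v n \<in> F (fst l)"
    "\<And>n. dist (snd (p n)) (v n) \<le> L * dist (fst (p n)) (fst l)"
    by auto
  have "(\<lambda>n. L * dist (fst (p n)) (fst l)) \<longlonglongrightarrow> 0"
    using tendsto_mult_left[OF tendsto_dist[OF tendsto_fst[OF lim] tendsto_const[of "fst l"]], of L]
    by simp
  then have "(\<lambda>n. snd (p n) - v n) \<longlonglongrightarrow> 0"
    by (rule Lim_null_comparison[rotated]) (use v(2) in \<open>simp add: dist_norm\<close>)
  then have "(\<lambda>n. snd (p n) - (snd (p n) - v n)) \<longlonglongrightarrow> snd l - 0"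
    using lim by (intro tendsto_diff tendsto_snd)
  then have "snd l \<in> F (fst l)"
    using closed_sequentially[OF closed_values v(1)] by simp
  then show "l \<in> {(x, y). y \<in> F x}"
    by (simp add: case_prod_beta)
qed

lemma Hmap_subset_cball:
  assumes "\<And>y u. y \<in> S \<Longrightarrow> u \<in> hinf h x y \<Longrightarrow> norm u \<le> R"
  shows "Hmap h S x \<subseteq> cball 0 R"
  unfolding Hmap_def using assms
  by (intro closure_minimal hull_minimal) auto

lemma hinf_subset_Hmap: "y \<in> S \<Longrightarrow> hinf h x y \<subseteq> Hmap h S x"
  unfolding Hmap_def by (meson UN_upper closure_subset hull_subset subset_trans)

lemma Hmap_lipschitz:
  fixes h :: "'a::{real_normed_vector, heine_borel} \<times> 'b \<Rightarrow> 'a"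
  assumes lip: "\<And>y x1 x2. y \<in> S \<Longrightarrow> norm (h (x1, y) - h (x2, y)) \<le> L * norm (x1 - x2)"
    and "compact (Hmap h S x2)" and w: "w \<in> Hmap h S x1"
  shows "\<exists>v\<in>Hmap h S x2. dist w v \<le> L * dist x1 x2"
proof -
  have "\<forall>u\<in>(\<Union>y\<in>S. hinf h x1 y). \<exists>v\<in>Hmap h S x2. dist u v \<le> L * dist x1 x2"
  proof
    fix u assume "u \<in> (\<Union>y\<in>S. hinf h x1 y)"
    then obtain y where y: "y \<in> S" "u \<in> hinf h x1 y"
      by blast
    with hinf_lipschitz[OF lip] hinf_subset_Hmap[OF y(1)]
    show "\<exists>v\<in>Hmap h S x2. dist u v \<le> L * dist x1 x2"
      by blast
  qed
  moreover have "convex (Hmap h S x2)"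
    by (simp add: Hmap_def)
  ultimately show ?thesis
    using closure_convex_hull_near_compact_convex assms(2) w
    unfolding Hmap_def[of h S x1] by blast
qed

lemma Hmap_subset_cball_affine:
  fixes h :: "'a::real_normed_vector \<times> 'b::topological_space \<Rightarrow> 'a"
  assumes "compact S" and "continuous_on (UNIV \<times> S) h"
    and lip: "\<And>y x1 x2. y \<in> S \<Longrightarrow> norm (h (x1, y) - h (x2, y)) \<le> L * norm (x1 - x2)"
  obtains M where "M \<ge> 0" "\<And>x. Hmap h S x \<subseteq> cball 0 (M + L * norm x)"
proof -
  have "continuous_on S (\<lambda>y. h (0, y))"
    by (rule continuous_on_compose2[OF assms(2)]) (auto intro!: continuous_intros)
  then have "bounded ((\<lambda>y. h (0, y)) ` S)"
    using assms(1) by (intro compact_imp_bounded compact_continuous_image)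
  then obtain M where "M > 0" and "\<forall>z\<in>(\<lambda>y. h (0, y)) ` S. norm z \<le> M"
    by (auto simp: bounded_pos)
  then have M: "\<And>y. y \<in> S \<Longrightarrow> norm (h (0, y)) \<le> M"
    by blast
  have "Hmap h S x \<subseteq> cball 0 (M + L * norm x)" for x
  proof (rule Hmap_subset_cball)
    fix y u assume y: "y \<in> S" and "u \<in> hinf h x y"
    then have "norm u \<le> norm (h (0, y)) + L * norm x"
      by (intro norm_hinf_le[OF lip[OF y]])
    then show "norm u \<le> M + L * norm x"
      using M[OF y] by linarith
  qed
  with \<open>M > 0\<close> show thesis
    by (intro that[of M]) auto
qed

lemma marchaudI_affine_bound:
  fixes F :: "'a::euclidean_space \<Rightarrow> 'c::euclidean_space set"
  assumes "\<And>x. convex (F x)" and "\<And>x. closed (F x)"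
    and bound: "\<And>x. F x \<subseteq> cball 0 (M + K * norm x)" and "M \<ge> 0" "K \<ge> 0"
    and "closed {(x, y). y \<in> F x}"
  shows "marchaud F"
  unfolding marchaud_def
proof (intro conjI allI exI[of _ "M + K + 1"])
  show "compact (F x)" for x
    using bounded_subset[OF bounded_cball bound] assms(2) by (simp add: compact_eq_bounded_closed)
  show "\<forall>w\<in>F x. norm w < (M + K + 1) * (1 + norm x)" for x
  proof
    fix w assume "w \<in> F x"
    then have "norm w \<le> M + K * norm x"
      using bound[of x] by auto
    moreover have "0 \<le> M * norm x"
      using \<open>M \<ge> 0\<close> by simp
    moreover have "(M + K + 1) * (1 + norm x) = M + K + 1 + M * norm x + K * norm x + norm x"
      by (simp add: algebra_simps)
    ultimately show "norm w < (M + K + 1) * (1 + norm x)"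
      using \<open>K \<ge> 0\<close> norm_ge_zero[of x] by linarith
  qed
qed (use assms in auto)

theorem lemma2:
  fixes h :: "'a::euclidean_space \<times> 'b::metric_space \<Rightarrow> 'a"
    and S :: "'b set" and L :: real
  assumes "compact S"
    and "continuous_on (UNIV \<times> S) h"
    and "L > 0"
    and "\<forall>x1 x2. \<forall>y\<in>S. norm (h (x1, y) - h (x2, y)) \<le> L * norm (x1 - x2)"
    and S1: "\<And>(c::nat \<Rightarrow> real) (ys::nat \<Rightarrow> 'b) y x u.
       mono c \<Longrightarrow> filterlim c at_top sequentially \<Longrightarrow> (\<forall>n. c n \<ge> 1) \<Longrightarrow>
       (\<forall>n. ys n \<in> S) \<Longrightarrow> y \<in> S \<Longrightarrow> ys \<longlonglongrightarrow> y \<Longrightarrow>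
       (\<lambda>n. hscale h (c n) x (ys n)) \<longlonglongrightarrow> u \<Longrightarrow> u \<in> hinf h x y"
  shows "marchaud (Hmap h S)"
proof -
  have lip: "\<And>y x1 x2. y \<in> S \<Longrightarrow> norm (h (x1, y) - h (x2, y)) \<le> L * norm (x1 - x2)"
    using assms(4) by blast
  obtain M where "M \<ge> 0" and bound: "\<And>x. Hmap h S x \<subseteq> cball 0 (M + L * norm x)"
    using Hmap_subset_cball_affine[OF assms(1,2) lip] by blast
  have closed_values: "closed (Hmap h S x)" for x
    by (simp add: Hmap_def)
  have compact: "compact (Hmap h S x)" for x
    using bounded_subset[OF bounded_cball bound] closed_values by (simp add: compact_eq_bounded_closed)
  have "closed {(x, y). y \<in> Hmap h S x}"
    using closed_values Hmap_lipschitz[OF lip compact] by (rule closed_graph_if_lipschitz_values)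
  then show ?thesis
    using \<open>L > 0\<close>
    by (intro marchaudI_affine_bound[OF _ closed_values bound \<open>M \<ge> 0\<close>]) (simp_all add: Hmap_def)
qed

end
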